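(* Let $T,Q,R$ be pairwise compatible tilings. Then $R$ is compatible with $T\cap Q$ and with $T\cup Q$, and $R\cap(T\cup Q)=(R\cap T)\cup(R\cap Q)$.
   Context: Fix an integer $n\ge 3$ and write $[n]=\{1,\dots,n\}$. Let $\Lambda$ be the set of 3-element subsets of $[n]$; a triple $\{i,j,k\}$ with $i<j<k$ is written $ijk$. For a 4-element subset $F=\{i<j<k<l\}$ of $[n]$, the stick of $F$ is the sequence $(ijk,\ ijl,\ ikl,\ jkl)$. A tiling (the inversion set of a rhombus tiling of the zonogon $Z(n;2)$) is a subset $T\subseteq\Lambda$ such that for every 4-element $F\subseteq[n]$, $T\cap\mathrm{stick}(F)$ is an initial segment or a final segment of the stick (empty set and whole stick allowed). Two tilings $T,T'$ are compatible if both $T\cap T'$ and $T\cup T'$ are tilings. *)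

theory Defs
  imports Main
begin

definition triples :: "nat \<Rightarrow> nat set set" where
  "triples n = {A. A \<subseteq> {1..n} \<and> card A = 3}"

text \<open>Stick of a 4-element set F = {i<j<k<l}: the list (ijk, ijl, ikl, jkl).\<close>
definition stick :: "nat set \<Rightarrow> nat set list" where
  "stick F = (let xs = sorted_list_of_set F in
     [F - {xs ! 3}, F - {xs ! 2}, F - {xs ! 1}, F - {xs ! 0}])"

definition is_tiling :: "nat \<Rightarrow> nat set set \<Rightarrow> bool" where
  "is_tiling n T \<longleftrightarrow> T \<subseteq> triples n \<and>
     (\<forall>F. F \<subseteq> {1..n} \<and> card F = 4 \<longrightarrow>
        (\<exists>m\<le>4. T \<inter> set (stick F) = set (take m (stick F))
               \<or> T \<inter> set (stick F) = set (drop m (stick F))))"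

definition compatible :: "nat \<Rightarrow> nat set set \<Rightarrow> nat set set \<Rightarrow> bool" where
  "compatible n T T' \<longleftrightarrow> is_tiling n (T \<inter> T') \<and> is_tiling n (T \<union> T')"

end

theory Submission
  imports Defs
begin

(* A tiling meets each stick in an initial or final segment, i.e. its membership
   pattern along the stick is monotone (decreasing or increasing). Hence both
   compatibility claims come down, stick by stick, to a propositional fact about
   the twelve membership bits of T, Q and R on the four triples of the stick,
   which is checked exhaustively; the distributive law is plain set algebra. *)

definition meets_in_segment :: "'a list \<Rightarrow> 'a set \<Rightarrow> bool" where
  "meets_in_segment s X \<longleftrightarrow>
     (\<exists>m. X \<inter> set s = set (take m s) \<or> X \<inter> set s = set (drop m s))"

lemma ex_Int_set_eq_set_take_iff_antitone:
  assumes "distinct s"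
  shows "(\<exists>m. X \<inter> set s = set (take m s)) \<longleftrightarrow> sorted_wrt (\<ge>) (map (\<lambda>x. x \<in> X) s)"
  using assms
proof (induction s)
  case (Cons x s)
  show ?case
  proof (cases "x \<in> X")
    case True
    have "X \<inter> set (x # s) = set (take m (x # s)) \<longleftrightarrow>
          (\<exists>m'. m = Suc m' \<and> X \<inter> set s = set (take m' s))" for m
      using True Cons.prems by (cases m) (auto simp: insert_ident dest: in_set_takeD)
    then show ?thesis using Cons True by (auto simp: sorted_wrt_map)
  next
    case False
    have "(\<exists>m. X \<inter> set (x # s) = set (take m (x # s))) \<longleftrightarrow> X \<inter> set s = {}"
    proof
      assume "\<exists>m. X \<inter> set (x # s) = set (take m (x # s))"
      then obtain m where "X \<inter> set (x # s) = set (take m (x # s))" ..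
      with False show "X \<inter> set s = {}" by (cases m) auto
    next
      assume "X \<inter> set s = {}"
      with False show "\<exists>m. X \<inter> set (x # s) = set (take m (x # s))"
        by (intro exI[of _ 0]) auto
    qed
    then show ?thesis
      using False by (auto simp: sorted_wrt_map intro: sorted_wrt_mono_rel[of _ "\<lambda>_ _. True"])
  qed
qed simp

lemma Int_set_eq_set_drop_iff:
  assumes "distinct s"
  shows "X \<inter> set s = set (drop m s) \<longleftrightarrow> - X \<inter> set s = set (take m s)"
proof -
  have "set s = set (take m s) \<union> set (drop m s)"
    by (metis append_take_drop_id set_append)
  moreover have "set (take m s) \<inter> set (drop m s) = {}"
    using set_take_disj_set_drop_if_distinct[OF assms order_refl] .
  ultimately show ?thesis by blast
qed

lemma meets_in_segment_iff_sorted: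
  assumes "distinct s"
  shows "meets_in_segment s X \<longleftrightarrow>
    sorted_wrt (\<ge>) (map (\<lambda>x. x \<in> X) s) \<or> sorted (map (\<lambda>x. x \<in> X) s)"
proof -
  have "sorted_wrt (\<ge>) (map (\<lambda>x. x \<in> - X) s) \<longleftrightarrow> sorted (map (\<lambda>x. x \<in> X) s)"
    by (auto simp: sorted_wrt_map le_bool_def elim!: sorted_wrt_mono_rel[rotated])
  then show ?thesis
    unfolding meets_in_segment_def Int_set_eq_set_drop_iff[OF assms] ex_disj_distrib
      ex_Int_set_eq_set_take_iff_antitone[OF assms] by blast
qed

lemma length_stick: "length (stick F) = 4"
  by (simp add: stick_def Let_def)

lemma distinct_stick:
  assumes "card F = 4"
  shows "distinct (stick F)"
proof -
  define xs where "xs = sorted_list_of_set F"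
  have "finite F" using assms card.infinite by force
  then have xs: "distinct xs" "set xs = F" "length xs = 4"
    using assms by (simp_all add: xs_def)
  then obtain a b c d where "xs = [a, b, c, d]"
    by (auto simp: numeral_eq_Suc length_Suc_conv)
  then have "stick F = map (\<lambda>x. F - {x}) (rev xs)"
    by (simp add: stick_def xs_def[symmetric])
  moreover have "inj_on (\<lambda>x. F - {x}) F"
    by (auto simp: inj_on_def)
  ultimately show ?thesis
    using xs by (simp add: distinct_map)
qed

definition compatible_on :: "'a list \<Rightarrow> 'a set \<Rightarrow> 'a set \<Rightarrow> bool" where
  "compatible_on s A B \<longleftrightarrow> meets_in_segment s (A \<inter> B) \<and> meets_in_segment s (A \<union> B)"

lemma compatible_on_Int_Un:
  assumes "length s = 4" "distinct s"
    and "meets_in_segment s A" "meets_in_segment s B" "meets_in_segment s C"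
    and "compatible_on s A B" "compatible_on s A C" "compatible_on s B C"
  shows "compatible_on s C (A \<inter> B) \<and> compatible_on s C (A \<union> B)"
proof -
  obtain w x y z where s: "s = [w, x, y, z]"
    using assms(1) by (auto simp: numeral_eq_Suc length_Suc_conv)
  have distinct: "distinct [w, x, y, z]"
    using assms(2) s by simp
  from assms(3-) show ?thesis
    unfolding compatible_on_def s meets_in_segment_iff_sorted[OF distinct]
    by (simp add: le_bool_def) argo
qed

lemma meets_in_segment_iff_bounded:
  assumes "length s \<le> k"
  shows "meets_in_segment s X \<longleftrightarrow>
    (\<exists>m\<le>k. X \<inter> set s = set (take m s) \<or> X \<inter> set s = set (drop m s))"
  unfolding meets_in_segment_def
  using assms by (metis min.cobounded2 take_all drop_all nle_le order.trans)

lemma is_tiling_iff_meets_in_segment: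
  "is_tiling n T \<longleftrightarrow> T \<subseteq> triples n \<and>
     (\<forall>F. F \<subseteq> {1..n} \<and> card F = 4 \<longrightarrow> meets_in_segment (stick F) T)"
  unfolding is_tiling_def meets_in_segment_iff_bounded[OF eq_imp_le[OF length_stick]] ..

theorem lemma1:
  fixes n :: nat and T Q R :: "nat set set"
  assumes "n \<ge> 3"
    and "is_tiling n T" and "is_tiling n Q" and "is_tiling n R"
    and "compatible n T Q" and "compatible n T R" and "compatible n Q R"
  shows "compatible n R (T \<inter> Q) \<and> compatible n R (T \<union> Q)
         \<and> R \<inter> (T \<union> Q) = (R \<inter> T) \<union> (R \<inter> Q)"
proof -
  have "compatible_on (stick F) R (T \<inter> Q) \<and> compatible_on (stick F) R (T \<union> Q)"
    if "F \<subseteq> {1..n}" "card F = 4" for F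
    using assms(2-) that unfolding compatible_def is_tiling_iff_meets_in_segment
    by (intro compatible_on_Int_Un[OF length_stick distinct_stick]) (auto simp: compatible_on_def)
  moreover have "T \<subseteq> triples n" "Q \<subseteq> triples n" "R \<subseteq> triples n"
    using assms(2-4) by (simp_all add: is_tiling_def)
  ultimately show ?thesis
    unfolding compatible_def is_tiling_iff_meets_in_segment compatible_on_def by blast
qed

end
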